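(* Let $\mathfrak{g}$ be a Leibniz algebra whose Schur $\mathrm{Lie}$-multiplier $\mathcal{M}^{\mathrm{Lie}}(\mathfrak{g})$ is finite-dimensional. Then any two $\mathrm{Lie}$-stem covers of $\mathfrak{g}$ are $\mathrm{Lie}$-isoclinic.
   Context: Fix a field $\mathbb{K}$ with $\frac12\in\mathbb{K}$. A Leibniz algebra is a $\mathbb{K}$-vector space with a bilinear bracket satisfying $[x,[y,z]]=[[x,y],z]-[[x,z],y]$. $\mathfrak{p}^{\mathrm{ann}}$ is the span of all $[x,x]$, $\mathfrak{p}_{\mathrm{Lie}}=\mathfrak{p}/\mathfrak{p}^{\mathrm{ann}}$. $[\mathfrak{m},\mathfrak{n}]_{\mathrm{Lie}}$ is the span of all $[m,n]+[n,m]$. $Z_{\mathrm{Lie}}(\mathfrak{p})=\{z:[x,z]+[z,x]=0\ \forall x\}$. An extension $0\to\mathfrak{m}\to\mathfrak{p}\to\mathfrak{g}\to0$ is $\mathrm{Lie}$-central if $\mathfrak{m}\subseteq Z_{\mathrm{Lie}}(\mathfrak{p})$; a $\mathrm{Lie}$-stem extension if moreover $\mathfrak{p}_{\mathrm{Lie}}\to\mathfrak{g}_{\mathrm{Lie}}$ is an isomorphism (equivalently $\mathfrak{m}\subseteq\mathfrak{p}^{\mathrm{ann}}$); a $\mathrm{Lie}$-stem cover if moreover the induced map $\mathcal{M}^{\mathrm{Lie}}(\mathfrak{p})\to\mathcal{M}^{\mathrm{Lie}}(\mathfrak{g})$ is zero. Here for a free presentation $0\to\mathfrak{r}\to\mathfrak{f}\to\mathfrak{g}\to0$,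 $\mathcal{M}^{\mathrm{Lie}}(\mathfrak{g})=\frac{\mathfrak{r}\cap[\mathfrak{f},\mathfrak{f}]_{\mathrm{Lie}}}{[\mathfrak{f},\mathfrak{r}]_{\mathrm{Lie}}}$. For $\mathrm{Lie}$-central extensions $0\to\mathfrak{n}_i\to\mathfrak{g}_i\xrightarrow{\pi_i}\mathfrak{q}_i\to0$ ($i=1,2$), let $C_i:\mathfrak{q}_i\times\mathfrak{q}_i\to[\mathfrak{g}_i,\mathfrak{g}_i]_{\mathrm{Lie}}$, $C_i(\pi_i(x),\pi_i(y))=[x,y]+[y,x]$ (well defined). The extensions are $\mathrm{Lie}$-isoclinic if there are isomorphisms $\eta:\mathfrak{q}_1\to\mathfrak{q}_2$ and $\xi:[\mathfrak{g}_1,\mathfrak{g}_1]_{\mathrm{Lie}}\to[\mathfrak{g}_2,\mathfrak{g}_2]_{\mathrm{Lie}}$ with $\xi\circ C_1=C_2\circ(\eta\times\eta)$. *)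

theory Defs
  imports Complex_Main "HOL-Library.Poly_Mapping"
begin

text \<open>A Leibniz algebra over the field 'k is represented by a type 'v (its carrier is UNIV),
  a scalar multiplication s and a bracket b.\<close>

definition leibniz_algebra :: "('k::field \<Rightarrow> 'v::ab_group_add \<Rightarrow> 'v) \<Rightarrow> ('v \<Rightarrow> 'v \<Rightarrow> 'v) \<Rightarrow> bool" where
  "leibniz_algebra s b \<longleftrightarrow> vector_space s
     \<and> (\<forall>x y z. b x (y + z) = b x y + b x z \<and> b (x + y) z = b x z + b y z)
     \<and> (\<forall>c x y. b (s c x) y = s c (b x y) \<and> b x (s c y) = s c (b x y))
     \<and> (\<forall>x y z. b x (b y z) = b (b x y) z - b (b x z) y)"

definition leib_hom ::
  "('k::field \<Rightarrow> 'v::ab_group_add \<Rightarrow> 'v) \<Rightarrow> ('v \<Rightarrow> 'v \<Rightarrow> 'v) \<Rightarrow>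
   ('k \<Rightarrow> 'w::ab_group_add \<Rightarrow> 'w) \<Rightarrow> ('w \<Rightarrow> 'w \<Rightarrow> 'w) \<Rightarrow> ('v \<Rightarrow> 'w) \<Rightarrow> bool" where
  "leib_hom s1 b1 s2 b2 f \<longleftrightarrow> Vector_Spaces.linear s1 s2 f \<and> (\<forall>x y. f (b1 x y) = b2 (f x) (f y))"

definition lie_sym :: "('k::field \<Rightarrow> 'v::ab_group_add \<Rightarrow> 'v) \<Rightarrow> ('v \<Rightarrow> 'v \<Rightarrow> 'v) \<Rightarrow> 'v set \<Rightarrow> 'v set \<Rightarrow> 'v set" where
  "lie_sym s b A B = module.span s {b x y + b y x | x y. x \<in> A \<and> y \<in> B}"

definition leib_ann :: "('k::field \<Rightarrow> 'v::ab_group_add \<Rightarrow> 'v) \<Rightarrow> ('v \<Rightarrow> 'v \<Rightarrow> 'v) \<Rightarrow> 'v set" where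
  "leib_ann s b = module.span s {b x x | x. True}"

definition lie_center :: "('v::ab_group_add \<Rightarrow> 'v \<Rightarrow> 'v) \<Rightarrow> 'v set" where
  "lie_center b = {z. \<forall>x. b x z + b z x = 0}"

text \<open>An extension 0 -> m -> p -> g -> 0 is given by a surjective homomorphism pi : p -> g,
  with m = ker pi.\<close>
definition lie_central_ext ::
  "('k::field \<Rightarrow> 'p::ab_group_add \<Rightarrow> 'p) \<Rightarrow> ('p \<Rightarrow> 'p \<Rightarrow> 'p) \<Rightarrow>
   ('k \<Rightarrow> 'g::ab_group_add \<Rightarrow> 'g) \<Rightarrow> ('g \<Rightarrow> 'g \<Rightarrow> 'g) \<Rightarrow> ('p \<Rightarrow> 'g) \<Rightarrow> bool" where
  "lie_central_ext sp bp sg bg \<pi> \<longleftrightarrow>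
     leibniz_algebra sp bp \<and> leibniz_algebra sg bg \<and> leib_hom sp bp sg bg \<pi> \<and> surj \<pi>
     \<and> {x. \<pi> x = 0} \<subseteq> lie_center bp"

definition lie_stem_ext ::
  "('k::field \<Rightarrow> 'p::ab_group_add \<Rightarrow> 'p) \<Rightarrow> ('p \<Rightarrow> 'p \<Rightarrow> 'p) \<Rightarrow>
   ('k \<Rightarrow> 'g::ab_group_add \<Rightarrow> 'g) \<Rightarrow> ('g \<Rightarrow> 'g \<Rightarrow> 'g) \<Rightarrow> ('p \<Rightarrow> 'g) \<Rightarrow> bool" where
  "lie_stem_ext sp bp sg bg \<pi> \<longleftrightarrow>
     lie_central_ext sp bp sg bg \<pi> \<and> {x. \<pi> x = 0} \<subseteq> leib_ann sp bp"

text \<open>Free (non-associative) magma algebra FM(X) over 'k on the set X = UNIV :: 'a: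
  finitely supported 'k-linear combinations of binary trees with leaves in X.
  The free Leibniz algebra f on X is FM(X)/I, I the two-sided ideal generated by the
  Leibniz relators. We work with preimages in FM(X) of subspaces of f.\<close>

datatype 'a mtree = Leaf 'a | Node "'a mtree" "'a mtree"

definition fm_scale :: "'k::field \<Rightarrow> ('a mtree \<Rightarrow>\<^sub>0 'k) \<Rightarrow> ('a mtree \<Rightarrow>\<^sub>0 'k)" where
  "fm_scale c p = Poly_Mapping.map (\<lambda>v. c * v) p"

definition fm_br :: "('a mtree \<Rightarrow>\<^sub>0 'k::field) \<Rightarrow> ('a mtree \<Rightarrow>\<^sub>0 'k) \<Rightarrow> ('a mtree \<Rightarrow>\<^sub>0 'k)" where
  "fm_br p q = (\<Sum>t\<in>Poly_Mapping.keys p. \<Sum>u\<in>Poly_Mapping.keys q. Poly_Mapping.single (Node t u) (Poly_Mapping.lookup p t * Poly_Mapping.lookup q u))"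

inductive_set leib_ideal :: "('a mtree \<Rightarrow>\<^sub>0 'k::field) set" where
  rel: "fm_br x (fm_br y z) - (fm_br (fm_br x y) z - fm_br (fm_br x z) y) \<in> leib_ideal"
| zero: "0 \<in> leib_ideal"
| add: "p \<in> leib_ideal \<Longrightarrow> q \<in> leib_ideal \<Longrightarrow> p + q \<in> leib_ideal"
| scale: "p \<in> leib_ideal \<Longrightarrow> fm_scale c p \<in> leib_ideal"
| left: "p \<in> leib_ideal \<Longrightarrow> fm_br x p \<in> leib_ideal"
| right: "p \<in> leib_ideal \<Longrightarrow> fm_br p x \<in> leib_ideal"

definition set_sum :: "'v::plus set \<Rightarrow> 'v set \<Rightarrow> 'v set" where
  "set_sum A B = {x + y | x y. x \<in> A \<and> y \<in> B}"

primrec tree_eval :: "('a \<Rightarrow> 'a \<Rightarrow> 'a) \<Rightarrow> 'a mtree \<Rightarrow> 'a" where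
  "tree_eval b (Leaf x) = x"
| "tree_eval b (Node t u) = b (tree_eval b t) (tree_eval b u)"

text \<open>The canonical map FM(g) -> g (generators = elements of g).\<close>
definition fm_eval :: "('k::field \<Rightarrow> 'g::ab_group_add \<Rightarrow> 'g) \<Rightarrow> ('g \<Rightarrow> 'g \<Rightarrow> 'g) \<Rightarrow> ('g mtree \<Rightarrow>\<^sub>0 'k) \<Rightarrow> 'g" where
  "fm_eval s b p = (\<Sum>t\<in>Poly_Mapping.keys p. s (Poly_Mapping.lookup p t) (tree_eval b t))"

text \<open>Preimage in FM(g) of r = kernel of the free presentation f -> g.\<close>
definition pres_rel :: "('k::field \<Rightarrow> 'g::ab_group_add \<Rightarrow> 'g) \<Rightarrow> ('g \<Rightarrow> 'g \<Rightarrow> 'g) \<Rightarrow> ('g mtree \<Rightarrow>\<^sub>0 'k) set" where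
  "pres_rel s b = {p. fm_eval s b p = 0}"

text \<open>Preimage of r \<inter> [f,f]_Lie (numerator of the multiplier).\<close>
definition mult_num :: "('k::field \<Rightarrow> 'g::ab_group_add \<Rightarrow> 'g) \<Rightarrow> ('g \<Rightarrow> 'g \<Rightarrow> 'g) \<Rightarrow> ('g mtree \<Rightarrow>\<^sub>0 'k) set" where
  "mult_num s b = pres_rel s b \<inter> set_sum (lie_sym fm_scale fm_br UNIV UNIV) leib_ideal"

text \<open>Preimage of [f,r]_Lie (denominator of the multiplier).\<close>
definition mult_den :: "('k::field \<Rightarrow> 'g::ab_group_add \<Rightarrow> 'g) \<Rightarrow> ('g \<Rightarrow> 'g \<Rightarrow> 'g) \<Rightarrow> ('g mtree \<Rightarrow>\<^sub>0 'k) set" where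
  "mult_den s b = set_sum (lie_sym fm_scale fm_br UNIV (pres_rel s b)) leib_ideal"

text \<open>M^Lie(g) = (r \<inter> [f,f]_Lie)/[f,r]_Lie is finite-dimensional.\<close>
definition fin_dim_lie_multiplier :: "('k::field \<Rightarrow> 'g::ab_group_add \<Rightarrow> 'g) \<Rightarrow> ('g \<Rightarrow> 'g \<Rightarrow> 'g) \<Rightarrow> bool" where
  "fin_dim_lie_multiplier s b \<longleftrightarrow>
     (\<exists>S. finite S \<and> S \<subseteq> mult_num s b \<and> mult_num s b \<subseteq> module.span fm_scale (S \<union> mult_den s b))"

definition fm_map :: "('p \<Rightarrow> 'g) \<Rightarrow> ('p mtree \<Rightarrow>\<^sub>0 'k::field) \<Rightarrow> ('g mtree \<Rightarrow>\<^sub>0 'k)" where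
  "fm_map \<pi> p = (\<Sum>t\<in>Poly_Mapping.keys p. Poly_Mapping.single (map_mtree \<pi> t) (Poly_Mapping.lookup p t))"

text \<open>Lie-stem cover: the induced map M^Lie(p) -> M^Lie(g) is zero.\<close>
definition lie_stem_cover ::
  "('k::field \<Rightarrow> 'p::ab_group_add \<Rightarrow> 'p) \<Rightarrow> ('p \<Rightarrow> 'p \<Rightarrow> 'p) \<Rightarrow>
   ('k \<Rightarrow> 'g::ab_group_add \<Rightarrow> 'g) \<Rightarrow> ('g \<Rightarrow> 'g \<Rightarrow> 'g) \<Rightarrow> ('p \<Rightarrow> 'g) \<Rightarrow> bool" where
  "lie_stem_cover sp bp sg bg \<pi> \<longleftrightarrow>
     lie_stem_ext sp bp sg bg \<pi> \<and> fm_map \<pi> ` mult_num sp bp \<subseteq> mult_den sg bg"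

text \<open>C(pi x, pi y) = [x,y]+[y,x].\<close>
definition commC :: "('p::ab_group_add \<Rightarrow> 'p \<Rightarrow> 'p) \<Rightarrow> ('p \<Rightarrow> 'q) \<Rightarrow> 'q \<Rightarrow> 'q \<Rightarrow> 'p" where
  "commC b \<pi> a c = (let x = (SOME x. \<pi> x = a); y = (SOME y. \<pi> y = c) in b x y + b y x)"

definition lie_isoclinic ::
  "('k::field \<Rightarrow> 'g1::ab_group_add \<Rightarrow> 'g1) \<Rightarrow> ('g1 \<Rightarrow> 'g1 \<Rightarrow> 'g1) \<Rightarrow>
   ('k \<Rightarrow> 'q1::ab_group_add \<Rightarrow> 'q1) \<Rightarrow> ('q1 \<Rightarrow> 'q1 \<Rightarrow> 'q1) \<Rightarrow> ('g1 \<Rightarrow> 'q1) \<Rightarrow>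
   ('k \<Rightarrow> 'g2::ab_group_add \<Rightarrow> 'g2) \<Rightarrow> ('g2 \<Rightarrow> 'g2 \<Rightarrow> 'g2) \<Rightarrow>
   ('k \<Rightarrow> 'q2::ab_group_add \<Rightarrow> 'q2) \<Rightarrow> ('q2 \<Rightarrow> 'q2 \<Rightarrow> 'q2) \<Rightarrow> ('g2 \<Rightarrow> 'q2) \<Rightarrow> bool" where
  "lie_isoclinic s1 b1 sq1 bq1 \<pi>1 s2 b2 sq2 bq2 \<pi>2 \<longleftrightarrow>
     (\<exists>\<eta> \<xi>.
        bij \<eta> \<and> leib_hom sq1 bq1 sq2 bq2 \<eta>
      \<and> bij_betw \<xi> (lie_sym s1 b1 UNIV UNIV) (lie_sym s2 b2 UNIV UNIV)
      \<and> (\<forall>x\<in>lie_sym s1 b1 UNIV UNIV. \<forall>y\<in>lie_sym s1 b1 UNIV UNIV.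
            \<xi> (x + y) = \<xi> x + \<xi> y \<and> \<xi> (b1 x y) = b2 (\<xi> x) (\<xi> y))
      \<and> (\<forall>c. \<forall>x\<in>lie_sym s1 b1 UNIV UNIV. \<xi> (s1 c x) = s2 c (\<xi> x))
      \<and> (\<forall>a c. \<xi> (commC b1 \<pi>1 a c) = commC b2 \<pi>2 (\<eta> a) (\<eta> c)))"

end

theory Submission
  imports Defs
begin

text \<open>Take \<open>\<eta> = id\<close>. For \<open>v \<in> [p1,p1]_Lie\<close> choose a preimage \<open>P\<close> of \<open>v\<close> in the
  symmetric bracket span of the free algebra on \<open>p1\<close>, and let \<open>\<xi> v\<close> be the value of \<open>P\<close> in \<open>p2\<close>
  along \<open>inv \<pi>2 \<circ> \<pi>1\<close>. Two choices differ by a representative of \<open>M^Lie(p1)\<close>; the cover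
  condition sends it into \<open>[f,r]_Lie\<close> for \<open>g\<close>, which evaluates to \<open>0\<close> in \<open>p2\<close> because
  relators of \<open>g\<close> land in \<open>ker \<pi>2 \<subseteq> Z_Lie(p2)\<close>. On generators
  \<open>\<xi>([x,y]+[y,x]) = [x',y']+[y',x']\<close> for any preimages \<open>x', y'\<close> of \<open>\<pi>1 x, \<pi>1 y\<close>, and this
  expression does not depend on the choice of preimages; so the map built the other way round is
  inverse to \<open>\<xi>\<close>, and \<open>\<xi>\<close> intertwines the commutator maps. Brackets with elements of
  \<open>[p,p]_Lie\<close> vanish by the Leibniz identity.\<close>

lemma lookup_fm_scale [simp]: "Poly_Mapping.lookup (fm_scale c p) t = c * Poly_Mapping.lookup p t"
  unfolding fm_scale_def by (simp add: Poly_Mapping.map.rep_eq when_def)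

lemma vector_space_fm_scale: "vector_space (fm_scale :: 'k::field \<Rightarrow> ('a mtree \<Rightarrow>\<^sub>0 'k) \<Rightarrow> _)"
  unfolding vector_space_def
  by (auto simp: poly_mapping_eq_iff lookup_add algebra_simps fun_eq_iff)

lemma (in module) fixed_on_span:
  assumes "v \<in> span S"
    and "\<And>x y. x \<in> span S \<Longrightarrow> y \<in> span S \<Longrightarrow> f (x + y) = f x + f y"
    and "\<And>c x. x \<in> span S \<Longrightarrow> f (c *s x) = c *s f x"
    and "\<And>x. x \<in> S \<Longrightarrow> f x = x"
  shows "f v = v"
proof -
  have "v \<in> span S \<and> f v = v"
    using \<open>v \<in> span S\<close>
  proof (induct rule: span_induct_alt)
    case base
    have "f 0 = f (0 *s 0)" by simp
    also have "\<dots> = 0" using assms(3)[of 0 0] span_zero by simp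
    finally show ?case using span_zero by simp
  next
    case (step c x y)
    then show ?case using assms(2-4) by (simp add: span_add span_scale span_base)
  qed
  then show ?thesis by simp
qed

lemma leibniz_algebraD:
  assumes "leibniz_algebra s b"
  shows "vector_space s" "module s" "b x (y + z) = b x y + b x z" "b (x + y) z = b x z + b y z"
    "b (s c x) y = s c (b x y)" "b x (s c y) = s c (b x y)"
    "b x (b y z) = b (b x y) z - b (b x z) y"
  using assms unfolding leibniz_algebra_def by (auto simp: module_iff_vector_space)

lemma leibniz_bracket_additive:
  assumes "leibniz_algebra s b"
  shows "b 0 y = 0" "b x 0 = 0" "b (sum f A) y = (\<Sum>a\<in>A. b (f a) y)" "b x (sum f A) = (\<Sum>a\<in>A. b x (f a))"
    "b (x - x') y = b x y - b x' y" "b x (y - y') = b x y - b x y'"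
proof -
  interpret l: additive "\<lambda>x. b x y" for y by standard (rule leibniz_algebraD(4)[OF assms])
  interpret r: additive "\<lambda>y. b x y" for x by standard (rule leibniz_algebraD(3)[OF assms])
  show "b 0 y = 0" "b x 0 = 0" "b (sum f A) y = (\<Sum>a\<in>A. b (f a) y)" "b x (sum f A) = (\<Sum>a\<in>A. b x (f a))"
    "b (x - x') y = b x y - b x' y" "b x (y - y') = b x y - b x y'"
    using l.zero r.zero l.sum r.sum l.diff r.diff by auto
qed

text \<open>By the Leibniz identity \<open>[x,[y,z]] + [x,[z,y]] = 0\<close>.\<close>

lemma leibniz_bracket_lie_sym_right:
  assumes "leibniz_algebra s b" "y \<in> lie_sym s b UNIV UNIV"
  shows "b x y = 0"
proof -
  interpret module s by (rule leibniz_algebraD(2)[OF assms(1)])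
  show ?thesis using assms(2) unfolding lie_sym_def
    by (induct rule: span_induct_alt)
      (auto simp: leibniz_bracket_additive[OF assms(1)] leibniz_algebraD[OF assms(1)])
qed

lemma lie_central_ext_sym_bracket_cong:
  assumes "lie_central_ext sp bp sg bg \<pi>" "\<pi> x = \<pi> x'" "\<pi> y = \<pi> y'"
  shows "bp x y + bp y x = bp x' y' + bp y' x'"
proof -
  have L: "leibniz_algebra sp bp" and H: "leib_hom sp bp sg bg \<pi>"
    and Z: "{x. \<pi> x = 0} \<subseteq> lie_center bp"
    using assms(1) unfolding lie_central_ext_def by auto
  interpret h: module_hom sp sg \<pi> using H unfolding leib_hom_def by (simp add: linear_iff_module_hom)
  define m where "m = x' - x"
  define n where "n = y' - y"
  have "m \<in> lie_center bp" "n \<in> lie_center bp"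
    using Z by (auto simp: m_def n_def h.diff assms(2,3))
  then have m: "\<And>z. bp z m + bp m z = 0" and n: "\<And>z. bp z n + bp n z = 0"
    unfolding lie_center_def by auto
  have "bp x' y' + bp y' x' = bp (x + m) (y + n) + bp (y + n) (x + m)" by (simp add: m_def n_def)
  also have "\<dots> = (bp x y + bp y x) + (bp x n + bp n x) + (bp m y + bp y m) + (bp m n + bp n m)"
    by (simp add: leibniz_algebraD[OF L] algebra_simps)
  also have "\<dots> = bp x y + bp y x" using m[of y] m[of n] n[of x] by (simp add: add.commute)
  finally show ?thesis by simp
qed

lemma commC_eq_inv: "commC b \<pi> a c = b (inv \<pi> a) (inv \<pi> c) + b (inv \<pi> c) (inv \<pi> a)"
  by (simp add: commC_def inv_into_def Let_def)

definition fm_eval_along :: "('k::field \<Rightarrow> 'v::ab_group_add \<Rightarrow> 'v) \<Rightarrow> ('v \<Rightarrow> 'v \<Rightarrow> 'v) \<Rightarrow> ('a \<Rightarrow> 'v) \<Rightarrow>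
    ('a mtree \<Rightarrow>\<^sub>0 'k) \<Rightarrow> 'v" where
  "fm_eval_along s b h p = (\<Sum>t\<in>Poly_Mapping.keys p. s (Poly_Mapping.lookup p t) (tree_eval b (map_mtree h t)))"

lemma fm_eval_eq_fm_eval_along: "fm_eval s b = fm_eval_along s b id"
  by (simp add: fun_eq_iff fm_eval_def fm_eval_along_def mtree.map_id)

context
  fixes s :: "'k::field \<Rightarrow> 'v::ab_group_add \<Rightarrow> 'v" and b
  assumes leibniz: "leibniz_algebra s b"
begin

interpretation module s by (rule leibniz_algebraD(2)[OF leibniz])

lemma fm_eval_along_superset:
  assumes "finite K" "Poly_Mapping.keys p \<subseteq> K"
  shows "fm_eval_along s b h p = (\<Sum>t\<in>K. s (Poly_Mapping.lookup p t) (tree_eval b (map_mtree h t)))"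
  unfolding fm_eval_along_def
  by (rule sum.mono_neutral_left) (use assms in \<open>auto simp: in_keys_iff\<close>)

lemma linear_fm_eval_along: "Vector_Spaces.linear fm_scale s (fm_eval_along s b (h :: 'a \<Rightarrow> 'v))"
  unfolding Vector_Spaces.linear_iff
proof (intro conjI allI)
  show "vector_space fm_scale" by (rule vector_space_fm_scale)
  show "vector_space s" by (rule leibniz_algebraD(1)[OF leibniz])
  fix p q :: "'a mtree \<Rightarrow>\<^sub>0 'k"
  let ?K = "Poly_Mapping.keys p \<union> Poly_Mapping.keys q"
  have "finite ?K" "Poly_Mapping.keys (p + q) \<subseteq> ?K" by (auto simp: keys_add)
  then show "fm_eval_along s b h (p + q) = fm_eval_along s b h p + fm_eval_along s b h q"
    by (simp add: fm_eval_along_superset[of ?K] lookup_add scale_left_distrib sum.distrib)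
next
  fix c :: 'k and p :: "'a mtree \<Rightarrow>\<^sub>0 'k"
  have "Poly_Mapping.keys (fm_scale c p) \<subseteq> Poly_Mapping.keys p" by (auto simp: in_keys_iff)
  then show "fm_eval_along s b h (fm_scale c p) = s c (fm_eval_along s b h p)"
    by (simp add: fm_eval_along_superset[of "Poly_Mapping.keys p"] scale_sum_right)
qed

interpretation ev: module_hom fm_scale s "fm_eval_along s b h" for h
  using linear_fm_eval_along by (simp add: linear_iff_module_hom)

lemma fm_eval_along_single: "fm_eval_along s b h (Poly_Mapping.single t c) = s c (tree_eval b (map_mtree h t))"
  by (simp add: fm_eval_along_def)

lemma fm_eval_along_fm_br: "fm_eval_along s b h (fm_br p q) = b (fm_eval_along s b h p) (fm_eval_along s b h q)"
proof -
  let ?T = "\<lambda>t. tree_eval b (map_mtree h t)"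
  have "fm_eval_along s b h (fm_br p q) = (\<Sum>t\<in>Poly_Mapping.keys p. \<Sum>u\<in>Poly_Mapping.keys q.
        b (s (Poly_Mapping.lookup p t) (?T t)) (s (Poly_Mapping.lookup q u) (?T u)))"
    unfolding fm_br_def ev.sum
    by (simp add: fm_eval_along_single leibniz_algebraD[OF leibniz] mult.commute)
  also have "\<dots> = b (fm_eval_along s b h p) (fm_eval_along s b h q)"
    unfolding fm_eval_along_def by (simp add: leibniz_bracket_additive[OF leibniz]) (rule sum.swap)
  finally show ?thesis .
qed

lemma fm_eval_along_leib_ideal: "p \<in> leib_ideal \<Longrightarrow> fm_eval_along s b h p = 0"
  by (induct rule: leib_ideal.induct)
    (auto simp: ev.diff ev.add ev.scale fm_eval_along_fm_br leibniz_algebraD(7)[OF leibniz]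
      leibniz_bracket_additive[OF leibniz])

lemma fm_eval_along_fm_map: "fm_eval_along s b h (fm_map \<pi> p) = fm_eval_along s b (h \<circ> \<pi>) p"
  unfolding fm_map_def ev.sum fm_eval_along_single by (simp add: fm_eval_along_def mtree.map_comp)

lemma fm_eval_sym_bracket:
  "fm_eval s b (fm_br (Poly_Mapping.single (Leaf x) 1) (Poly_Mapping.single (Leaf y) 1)
      + fm_br (Poly_Mapping.single (Leaf y) 1) (Poly_Mapping.single (Leaf x) 1)) = b x y + b y x"
  unfolding fm_eval_eq_fm_eval_along ev.add fm_eval_along_fm_br fm_eval_along_single by simp

lemma lie_sym_subset_fm_eval_image:
  "lie_sym s b UNIV UNIV \<subseteq> fm_eval s b ` lie_sym fm_scale fm_br UNIV UNIV"
proof -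
  let ?G = "{fm_br x y + fm_br y x |x y. x \<in> (UNIV :: ('v mtree \<Rightarrow>\<^sub>0 'k) set) \<and> y \<in> UNIV}"
  have "{b x y + b y x |x y. x \<in> UNIV \<and> y \<in> UNIV} \<subseteq> fm_eval s b ` ?G"
  proof
    fix z assume "z \<in> {b x y + b y x |x y. x \<in> UNIV \<and> y \<in> UNIV}"
    then obtain x y where "z = b x y + b y x" by blast
    then show "z \<in> fm_eval s b ` ?G" using fm_eval_sym_bracket[of x y, symmetric] by blast
  qed
  then have "lie_sym s b UNIV UNIV \<subseteq> span (fm_eval_along s b id ` ?G)"
    unfolding lie_sym_def fm_eval_eq_fm_eval_along by (rule span_mono)
  also have "\<dots> = fm_eval s b ` lie_sym fm_scale fm_br UNIV UNIV"
    unfolding lie_sym_def fm_eval_eq_fm_eval_along by (rule ev.span_image)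
  finally show ?thesis .
qed

end

lemma leib_hom_fm_eval_along:
  assumes "leibniz_algebra s b" "leibniz_algebra s' b'" "leib_hom s b s' b' f"
  shows "f (fm_eval_along s b h p) = fm_eval_along s' b' (f \<circ> h) p"
proof -
  interpret f: module_hom s s' f using assms(3) unfolding leib_hom_def by (simp add: linear_iff_module_hom)
  have "f (tree_eval b (map_mtree h t)) = tree_eval b' (map_mtree (f \<circ> h) t)" for t
    using assms(3) unfolding leib_hom_def by (induct t) auto
  then show ?thesis unfolding fm_eval_along_def f.sum f.scale by simp
qed

lemma lie_central_ext_fm_eval_along_inv_mult_den:
  assumes central: "lie_central_ext sp bp sg bg \<pi>" and Q: "Q \<in> mult_den sg bg"
  shows "fm_eval_along sp bp (inv \<pi>) Q = 0"
proof -
  have Lp: "leibniz_algebra sp bp" and Z: "{x. \<pi> x = 0} \<subseteq> lie_center bp"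
    using central unfolding lie_central_ext_def by auto
  interpret ev: module_hom fm_scale sp "fm_eval_along sp bp (inv \<pi>)"
    using linear_fm_eval_along[OF Lp] by (simp add: linear_iff_module_hom)
  have \<pi>_ev: "\<pi> (fm_eval_along sp bp (inv \<pi>) p) = fm_eval sg bg p" for p
  proof -
    have "\<pi> (fm_eval_along sp bp (inv \<pi>) p) = fm_eval_along sg bg (\<pi> \<circ> inv \<pi>) p"
      by (rule leib_hom_fm_eval_along) (use central in \<open>auto simp: lie_central_ext_def\<close>)
    also have "\<pi> \<circ> inv \<pi> = id"
      using central unfolding lie_central_ext_def by (simp add: surj_iff)
    finally show ?thesis by (simp add: fm_eval_eq_fm_eval_along id_def)
  qed
  obtain x y where Q: "Q = x + y" and x: "x \<in> lie_sym fm_scale fm_br UNIV (pres_rel sg bg)"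
    and y: "y \<in> leib_ideal"
    using Q unfolding mult_den_def set_sum_def by auto
  have "fm_eval_along sp bp (inv \<pi>) x = 0"
    using x unfolding lie_sym_def
  proof (induct rule: ev.m1.span_induct)
    case base show ?case by (rule ev.subspace_kernel)
  next
    case (step z)
    then obtain t r where z: "z = fm_br t r + fm_br r t" and r: "r \<in> pres_rel sg bg" by auto
    have "fm_eval_along sp bp (inv \<pi>) r \<in> lie_center bp"
      using r Z \<pi>_ev unfolding pres_rel_def by auto
    then show ?case
      unfolding z ev.add fm_eval_along_fm_br[OF Lp] lie_center_def by simp
  qed
  then show ?thesis using Q fm_eval_along_leib_ideal[OF Lp y] ev.add by simp
qed

definition lie_transfer ::
  "('k::field \<Rightarrow> 'p1::ab_group_add \<Rightarrow> 'p1) \<Rightarrow> ('p1 \<Rightarrow> 'p1 \<Rightarrow> 'p1) \<Rightarrow> ('p1 \<Rightarrow> 'g) \<Rightarrow>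
   ('k \<Rightarrow> 'p2::ab_group_add \<Rightarrow> 'p2) \<Rightarrow> ('p2 \<Rightarrow> 'p2 \<Rightarrow> 'p2) \<Rightarrow> ('p2 \<Rightarrow> 'g) \<Rightarrow> 'p1 \<Rightarrow> 'p2" where
  "lie_transfer s1 b1 \<pi>1 s2 b2 \<pi>2 v = fm_eval_along s2 b2 (inv \<pi>2 \<circ> \<pi>1)
     (SOME P. P \<in> lie_sym fm_scale fm_br UNIV UNIV \<and> fm_eval s1 b1 P = v)"

locale lie_cover_transfer =
  fixes s :: "'k::field \<Rightarrow> 'g::ab_group_add \<Rightarrow> 'g" and b :: "'g \<Rightarrow> 'g \<Rightarrow> 'g"
    and s1 :: "'k \<Rightarrow> 'p1::ab_group_add \<Rightarrow> 'p1" and b1 :: "'p1 \<Rightarrow> 'p1 \<Rightarrow> 'p1" and \<pi>1 :: "'p1 \<Rightarrow> 'g"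
    and s2 :: "'k \<Rightarrow> 'p2::ab_group_add \<Rightarrow> 'p2" and b2 :: "'p2 \<Rightarrow> 'p2 \<Rightarrow> 'p2" and \<pi>2 :: "'p2 \<Rightarrow> 'g"
  assumes central1: "lie_central_ext s1 b1 s b \<pi>1"
    and central2: "lie_central_ext s2 b2 s b \<pi>2"
    and cover1: "fm_map \<pi>1 ` mult_num s1 b1 \<subseteq> mult_den s b"
begin

abbreviation "\<xi> \<equiv> lie_transfer s1 b1 \<pi>1 s2 b2 \<pi>2"

abbreviation "L1 \<equiv> lie_sym s1 b1 UNIV UNIV"

abbreviation "L2 \<equiv> lie_sym s2 b2 UNIV UNIV"

abbreviation "FL \<equiv> lie_sym fm_scale fm_br UNIV UNIV"

lemma leibniz1: "leibniz_algebra s1 b1"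
  using central1 unfolding lie_central_ext_def by auto

lemma leibniz2: "leibniz_algebra s2 b2"
  using central2 unfolding lie_central_ext_def by auto

sublocale eval1: module_hom fm_scale s1 "fm_eval s1 b1"
  using linear_fm_eval_along[OF leibniz1] by (simp add: linear_iff_module_hom fm_eval_eq_fm_eval_along)

sublocale push: module_hom fm_scale s2 "fm_eval_along s2 b2 (inv \<pi>2 \<circ> \<pi>1)"
  using linear_fm_eval_along[OF leibniz2] by (simp add: linear_iff_module_hom)

lemma lie_transfer_fm_eval:
  assumes P: "P \<in> FL"
  shows "\<xi> (fm_eval s1 b1 P) = fm_eval_along s2 b2 (inv \<pi>2 \<circ> \<pi>1) P"
proof -
  define Q where "Q = (SOME Q. Q \<in> FL \<and> fm_eval s1 b1 Q = fm_eval s1 b1 P)"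
  have "Q \<in> FL \<and> fm_eval s1 b1 Q = fm_eval s1 b1 P"
    unfolding Q_def by (rule someI[of _ P]) (use P in auto)
  then have "P - Q \<in> FL" "fm_eval s1 b1 (P - Q) = 0"
    using P unfolding lie_sym_def by (auto intro: eval1.m1.span_diff simp: eval1.diff)
  then have "P - Q \<in> mult_num s1 b1"
    unfolding mult_num_def pres_rel_def set_sum_def using leib_ideal.zero by force
  then have "fm_eval_along s2 b2 (inv \<pi>2) (fm_map \<pi>1 (P - Q)) = 0"
    using cover1 lie_central_ext_fm_eval_along_inv_mult_den[OF central2] by blast
  then show ?thesis
    unfolding lie_transfer_def Q_def[symmetric] fm_eval_along_fm_map[OF leibniz2] push.diff by simp
qed

lemma lie_transfer_sym_bracket:
  "\<xi> (b1 x y + b1 y x) =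
     b2 (inv \<pi>2 (\<pi>1 x)) (inv \<pi>2 (\<pi>1 y)) + b2 (inv \<pi>2 (\<pi>1 y)) (inv \<pi>2 (\<pi>1 x))"
proof -
  let ?X = "Poly_Mapping.single (Leaf x) (1::'k)" and ?Y = "Poly_Mapping.single (Leaf y) (1::'k)"
  have "fm_br ?X ?Y + fm_br ?Y ?X \<in> FL"
    unfolding lie_sym_def by (rule eval1.m1.span_base) blast
  from lie_transfer_fm_eval[OF this] show ?thesis
    by (simp add: fm_eval_sym_bracket[OF leibniz1] push.add fm_eval_along_fm_br[OF leibniz2]
        fm_eval_along_single[OF leibniz2] leibniz_algebraD(2)[OF leibniz2, THEN module.scale_one])
qed

lemma lie_transfer_add:
  assumes "v \<in> L1" "w \<in> L1"
  shows "\<xi> (v + w) = \<xi> v + \<xi> w"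
proof -
  obtain P R where "P \<in> FL" "R \<in> FL" "v = fm_eval s1 b1 P" "w = fm_eval s1 b1 R"
    using assms lie_sym_subset_fm_eval_image[OF leibniz1] by blast
  moreover have "P + R \<in> FL" using \<open>P \<in> FL\<close> \<open>R \<in> FL\<close>
    unfolding lie_sym_def by (rule eval1.m1.span_add)
  ultimately show ?thesis
    by (simp add: lie_transfer_fm_eval eval1.add[symmetric] push.add)
qed

lemma lie_transfer_scale:
  assumes "v \<in> L1"
  shows "\<xi> (s1 c v) = s2 c (\<xi> v)"
proof -
  obtain P where "P \<in> FL" "v = fm_eval s1 b1 P"
    using assms lie_sym_subset_fm_eval_image[OF leibniz1] by blast
  moreover have "fm_scale c P \<in> FL" using \<open>P \<in> FL\<close>
    unfolding lie_sym_def by (rule eval1.m1.span_scale)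
  ultimately show ?thesis
    by (simp add: lie_transfer_fm_eval eval1.scale[symmetric] push.scale)
qed

lemma lie_transfer_zero: "\<xi> 0 = 0"
  using lie_transfer_fm_eval[of 0] eval1.m1.span_zero unfolding lie_sym_def by simp

lemma lie_transfer_into:
  assumes "v \<in> L1"
  shows "\<xi> v \<in> L2"
proof -
  obtain P where P: "P \<in> FL" "v = fm_eval s1 b1 P"
    using assms lie_sym_subset_fm_eval_image[OF leibniz1] by blast
  have "fm_eval_along s2 b2 (inv \<pi>2 \<circ> \<pi>1) ` FL = push.m2.span (fm_eval_along s2 b2 (inv \<pi>2 \<circ> \<pi>1) `
      {fm_br x y + fm_br y x |x y. x \<in> UNIV \<and> y \<in> UNIV})"
    unfolding lie_sym_def by (rule push.span_image[symmetric])
  also have "\<dots> \<subseteq> L2"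
    unfolding lie_sym_def
  proof (rule push.m2.span_mono, rule image_subsetI)
    fix z :: "'p1 mtree \<Rightarrow>\<^sub>0 'k"
    assume "z \<in> {fm_br x y + fm_br y x |x y. x \<in> UNIV \<and> y \<in> UNIV}"
    then obtain x y where z: "z = fm_br x y + fm_br y x" by blast
    have "b2 u w + b2 w u \<in> {b2 x y + b2 y x |x y. x \<in> UNIV \<and> y \<in> UNIV}" for u w by blast
    then show "fm_eval_along s2 b2 (inv \<pi>2 \<circ> \<pi>1) z \<in> {b2 x y + b2 y x |x y. x \<in> UNIV \<and> y \<in> UNIV}"
      unfolding z push.add fm_eval_along_fm_br[OF leibniz2] .
  qed
  finally show ?thesis using P by (auto simp: lie_transfer_fm_eval)
qed

lemma lie_transfer_bracket:
  assumes "y \<in> L1"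
  shows "\<xi> (b1 x y) = b2 (\<xi> x) (\<xi> y)"
  using assms lie_transfer_into lie_transfer_zero
    leibniz_bracket_lie_sym_right[OF leibniz1] leibniz_bracket_lie_sym_right[OF leibniz2] by simp

lemma lie_transfer_commC: "\<xi> (commC b1 \<pi>1 a c) = commC b2 \<pi>2 a c"
  using central1 unfolding lie_central_ext_def
  by (simp add: commC_eq_inv lie_transfer_sym_bracket surj_f_inv_f)

end

lemma lie_transfer_inverse:
  assumes "lie_cover_transfer s b s1 b1 \<pi>1 s2 b2 \<pi>2" "lie_cover_transfer s b s2 b2 \<pi>2 s1 b1 \<pi>1"
    and v: "v \<in> lie_sym s1 b1 UNIV UNIV"
  shows "lie_transfer s2 b2 \<pi>2 s1 b1 \<pi>1 (lie_transfer s1 b1 \<pi>1 s2 b2 \<pi>2 v) = v"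
proof -
  interpret A: lie_cover_transfer s b s1 b1 \<pi>1 s2 b2 \<pi>2 by (rule assms(1))
  interpret B: lie_cover_transfer s b s2 b2 \<pi>2 s1 b1 \<pi>1 by (rule assms(2))
  have surj1: "surj \<pi>1" and surj2: "surj \<pi>2"
    using A.central1 A.central2 unfolding lie_central_ext_def by auto
  let ?G = "{b1 x y + b1 y x |x y. x \<in> UNIV \<and> y \<in> UNIV}"
  have L1_span: "A.L1 = A.eval1.m2.span ?G" by (simp only: lie_sym_def)
  have "(B.\<xi> \<circ> A.\<xi>) v = v"
  proof (rule A.eval1.m2.fixed_on_span)
    show "v \<in> A.eval1.m2.span ?G" using v unfolding L1_span .
  next
    fix x y assume "x \<in> A.eval1.m2.span ?G" "y \<in> A.eval1.m2.span ?G"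
    then have "x \<in> A.L1" "y \<in> A.L1" unfolding L1_span .
    then show "(B.\<xi> \<circ> A.\<xi>) (x + y) = (B.\<xi> \<circ> A.\<xi>) x + (B.\<xi> \<circ> A.\<xi>) y"
      by (simp add: A.lie_transfer_add B.lie_transfer_add A.lie_transfer_into)
  next
    fix c x assume "x \<in> A.eval1.m2.span ?G"
    then have "x \<in> A.L1" unfolding L1_span .
    then show "(B.\<xi> \<circ> A.\<xi>) (s1 c x) = s1 c ((B.\<xi> \<circ> A.\<xi>) x)"
      by (simp add: A.lie_transfer_scale B.lie_transfer_scale A.lie_transfer_into)
  next
    fix z assume "z \<in> ?G"
    then obtain x y where z: "z = b1 x y + b1 y x" by blast
    have "(B.\<xi> \<circ> A.\<xi>) z = b1 (inv \<pi>1 (\<pi>1 x)) (inv \<pi>1 (\<pi>1 y)) + b1 (inv \<pi>1 (\<pi>1 y)) (inv \<pi>1 (\<pi>1 x))"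
      by (simp add: z A.lie_transfer_sym_bracket B.lie_transfer_sym_bracket surj_f_inv_f[OF surj2])
    also have "\<dots> = z"
      unfolding z by (rule lie_central_ext_sym_bracket_cong[OF A.central1]) (simp_all add: surj_f_inv_f[OF surj1])
    finally show "(B.\<xi> \<circ> A.\<xi>) z = z" .
  qed
  then show ?thesis by simp
qed

lemma bij_betw_lie_transfer:
  assumes "lie_cover_transfer s b s1 b1 \<pi>1 s2 b2 \<pi>2" "lie_cover_transfer s b s2 b2 \<pi>2 s1 b1 \<pi>1"
  shows "bij_betw (lie_transfer s1 b1 \<pi>1 s2 b2 \<pi>2) (lie_sym s1 b1 UNIV UNIV) (lie_sym s2 b2 UNIV UNIV)"
  by (rule bij_betw_byWitness[where f' = "lie_transfer s2 b2 \<pi>2 s1 b1 \<pi>1"])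
    (simp_all add: lie_transfer_inverse[OF assms] lie_transfer_inverse[OF assms(2,1)] image_subset_iff
      lie_cover_transfer.lie_transfer_into[OF assms(1)] lie_cover_transfer.lie_transfer_into[OF assms(2)])

theorem mainTheorem13:
  fixes s :: "'k::field \<Rightarrow> 'g::ab_group_add \<Rightarrow> 'g" and b :: "'g \<Rightarrow> 'g \<Rightarrow> 'g"
    and s1 :: "'k \<Rightarrow> 'p1::ab_group_add \<Rightarrow> 'p1" and b1 :: "'p1 \<Rightarrow> 'p1 \<Rightarrow> 'p1" and \<pi>1 :: "'p1 \<Rightarrow> 'g"
    and s2 :: "'k \<Rightarrow> 'p2::ab_group_add \<Rightarrow> 'p2" and b2 :: "'p2 \<Rightarrow> 'p2 \<Rightarrow> 'p2" and \<pi>2 :: "'p2 \<Rightarrow> 'g"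
  assumes "(2::'k) \<noteq> 0"
    and "leibniz_algebra s b"
    and "fin_dim_lie_multiplier s b"
    and "lie_stem_cover s1 b1 s b \<pi>1"
    and "lie_stem_cover s2 b2 s b \<pi>2"
  shows "lie_isoclinic s1 b1 s b \<pi>1 s2 b2 s b \<pi>2"
proof -
  have covers: "lie_cover_transfer s b s1 b1 \<pi>1 s2 b2 \<pi>2" "lie_cover_transfer s b s2 b2 \<pi>2 s1 b1 \<pi>1"
    using assms(4,5) by (auto simp: lie_cover_transfer_def lie_stem_cover_def lie_stem_ext_def)
  interpret lie_cover_transfer s b s1 b1 \<pi>1 s2 b2 \<pi>2 by (rule covers(1))
  have "leib_hom s b s b id"
    using leibniz_algebraD(1)[OF assms(2)] by (simp add: leib_hom_def Vector_Spaces.linear_iff)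
  with bij_betw_lie_transfer[OF covers] show ?thesis
    unfolding lie_isoclinic_def
    by (intro exI[of _ id] exI[of _ \<xi>])
      (simp add: lie_transfer_add lie_transfer_scale lie_transfer_bracket lie_transfer_commC)
qed

end
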